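(* Let $\mathbb{F}$ be a field of characteristic different from $2$ and $\mathcal{J}Spin_n(\mathbb{F})$ the spin factor. Then every 2-local 1-automorphism of $\mathcal{J}Spin_n(\mathbb{F})$ is an automorphism.
   Context: $\mathcal{J}Spin_n(\mathbb{F})$ is the Jordan algebra with basis $\mathbf{1},s_1,\dots,s_n$ and product determined bilinearly by $\mathbf{1}$ being the identity, $s_is_i=\mathbf{1}$, and $s_is_j=0$ for $i\neq j$. A symmetry is an element $s$ with $s^2=\mathbf{1}$, and $U_s(x)=2s(sx)-x$. A 2-local 1-automorphism is a map $\Delta$ (not assumed linear) such that for every $x,y$ there is a symmetry $s$ with $\Delta(x)=U_s(x)$ and $\Delta(y)=U_s(y)$. *)

theory Defs
  imports Main
begin

text \<open>The spin factor JSpin_n(F) is modelled concretely: an element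
  a 1 + sum_{i<n} v_i s_i is the pair (a, v) with v :: nat => 'a vanishing
  outside {0..<n}.\<close>

type_synonym 'a spin = "'a \<times> (nat \<Rightarrow> 'a)"

definition spin_carrier :: "nat \<Rightarrow> ('a::field) spin set" where
  "spin_carrier n = {x. \<forall>i\<ge>n. snd x i = 0}"

definition spin_one :: "('a::field) spin" where
  "spin_one = (1, \<lambda>_. 0)"

definition spin_add :: "('a::field) spin \<Rightarrow> 'a spin \<Rightarrow> 'a spin" where
  "spin_add x y = (fst x + fst y, \<lambda>i. snd x i + snd y i)"

definition spin_smult :: "'a::field \<Rightarrow> 'a spin \<Rightarrow> 'a spin" where
  "spin_smult c x = (c * fst x, \<lambda>i. c * snd x i)"

text \<open>Jordan product, the bilinear extension of 1 being the identity,
  s_i s_i = 1 and s_i s_j = 0 for i \<noteq> j.\<close>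
definition spin_mult :: "nat \<Rightarrow> ('a::field) spin \<Rightarrow> 'a spin \<Rightarrow> 'a spin" where
  "spin_mult n x y =
     (fst x * fst y + (\<Sum>i<n. snd x i * snd y i), \<lambda>i. fst x * snd y i + fst y * snd x i)"

definition spin_symmetry :: "nat \<Rightarrow> ('a::field) spin \<Rightarrow> bool" where
  "spin_symmetry n s \<longleftrightarrow> s \<in> spin_carrier n \<and> spin_mult n s s = spin_one"

definition spin_U :: "nat \<Rightarrow> ('a::field) spin \<Rightarrow> 'a spin \<Rightarrow> 'a spin" where
  "spin_U n s x = spin_add (spin_smult 2 (spin_mult n s (spin_mult n s x))) (spin_smult (-1) x)"

definition two_local_1_aut :: "nat \<Rightarrow> (('a::field) spin \<Rightarrow> 'a spin) \<Rightarrow> bool" where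
  "two_local_1_aut n \<Delta> \<longleftrightarrow>
     (\<forall>x\<in>spin_carrier n. \<forall>y\<in>spin_carrier n. \<exists>s. spin_symmetry n s \<and>
        \<Delta> x = spin_U n s x \<and> \<Delta> y = spin_U n s y)"

definition spin_automorphism :: "nat \<Rightarrow> (('a::field) spin \<Rightarrow> 'a spin) \<Rightarrow> bool" where
  "spin_automorphism n \<Phi> \<longleftrightarrow>
     bij_betw \<Phi> (spin_carrier n) (spin_carrier n) \<and>
     (\<forall>x\<in>spin_carrier n. \<forall>y\<in>spin_carrier n. \<Phi> (spin_add x y) = spin_add (\<Phi> x) (\<Phi> y)) \<and>
     (\<forall>c. \<forall>x\<in>spin_carrier n. \<Phi> (spin_smult c x) = spin_smult c (\<Phi> x)) \<and>
     (\<forall>x\<in>spin_carrier n. \<forall>y\<in>spin_carrier n. \<Phi> (spin_mult n x y) = spin_mult n (\<Phi> x) (\<Phi> y))"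

end

theory Submission
  imports Defs
begin

text \<open>Write x = (a, w) with scalar part a and vector part w, and let B = spin_inner be
  the standard bilinear form on vector parts. When 2 is invertible, a symmetry is either 1 or
  -1, where U_s is the identity, or s = (0, v) with B(v, v) = 1, where U_s fixes the scalar part
  and maps w to 2 B(v, w) v - w, an involutive isometry of B. Using one symmetry for the pair
  x, y shows that a 2-local 1-automorphism fixes scalar parts and preserves B on vector parts;
  applied to x and its image, it is an involution. Such a map is linear: the j-th coordinate of
  the vector part of the image of w is B(w, z), where z is the preimage of s_j. A linear
  bijection fixing scalar parts and preserving B preserves the Jordan product.\<close>

definition spin_inner :: "nat \<Rightarrow> (nat \<Rightarrow> 'a::field) \<Rightarrow> (nat \<Rightarrow> 'a) \<Rightarrow> 'a" where
  "spin_inner n v w = (\<Sum>i<n. v i * w i)"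

definition spin_basis :: "nat \<Rightarrow> ('a::field) spin" where
  "spin_basis j = (0, \<lambda>i. if i = j then 1 else 0)"

definition line_reflection :: "nat \<Rightarrow> (nat \<Rightarrow> 'a::field) \<Rightarrow> (nat \<Rightarrow> 'a) \<Rightarrow> nat \<Rightarrow> 'a" where
  "line_reflection n v w = (\<lambda>i. 2 * spin_inner n v w * v i - w i)"

definition spin_vector_isometry :: "nat \<Rightarrow> (('a::field) spin \<Rightarrow> 'a spin) \<Rightarrow> bool" where
  "spin_vector_isometry n \<Phi> \<longleftrightarrow> (\<forall>x\<in>spin_carrier n. \<forall>y\<in>spin_carrier n.
     spin_inner n (snd (\<Phi> x)) (snd (\<Phi> y)) = spin_inner n (snd x) (snd y))"

lemma spin_vector_isometryD:
  "spin_vector_isometry n \<Phi> \<Longrightarrow> x \<in> spin_carrier n \<Longrightarrow> y \<in> spin_carrier n \<Longrightarrow>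
    spin_inner n (snd (\<Phi> x)) (snd (\<Phi> y)) = spin_inner n (snd x) (snd y)"
  by (simp add: spin_vector_isometry_def)

lemma spin_basis_in_carrier: "j < n \<Longrightarrow> spin_basis j \<in> spin_carrier n"
  by (simp add: spin_basis_def spin_carrier_def)

lemma spin_add_in_carrier:
  "x \<in> spin_carrier n \<Longrightarrow> y \<in> spin_carrier n \<Longrightarrow> spin_add x y \<in> spin_carrier n"
  by (simp add: spin_carrier_def spin_add_def)

lemma spin_smult_in_carrier: "x \<in> spin_carrier n \<Longrightarrow> spin_smult c x \<in> spin_carrier n"
  by (simp add: spin_carrier_def spin_smult_def)

lemma spin_mult_in_carrier:
  "x \<in> spin_carrier n \<Longrightarrow> y \<in> spin_carrier n \<Longrightarrow> spin_mult n x y \<in> spin_carrier n"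
  by (simp add: spin_carrier_def spin_mult_def)

lemma spin_inner_spin_basis: "j < n \<Longrightarrow> spin_inner n v (snd (spin_basis j)) = v j"
  by (simp add: spin_inner_def spin_basis_def if_distrib cong: if_cong)

lemma spin_inner_lincomb_left:
  "spin_inner n (\<lambda>i. c * u i + d * v i) w = c * spin_inner n u w + d * spin_inner n v w"
  by (simp add: spin_inner_def sum.distrib sum_distrib_left algebra_simps)

lemma spin_inner_axis_line_reflection:
  "spin_inner n v (line_reflection n v w) = 2 * spin_inner n v w * spin_inner n v v - spin_inner n v w"
proof -
  have "spin_inner n v (line_reflection n v w) =
      (\<Sum>i<n. 2 * spin_inner n v w * (v i * v i) - v i * w i)"
    unfolding spin_inner_def line_reflection_def by (rule sum.cong) (simp_all add: algebra_simps)
  then show ?thesis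
    by (simp add: spin_inner_def sum_subtractf sum_distrib_left)
qed

lemma spin_inner_line_reflection:
  assumes "spin_inner n v v = 1"
  shows "spin_inner n (line_reflection n v w) (line_reflection n v u) = spin_inner n w u"
proof -
  let ?c = "spin_inner n v w" and ?d = "spin_inner n v u"
  have "spin_inner n (line_reflection n v w) (line_reflection n v u) =
      (\<Sum>i<n. 4 * ?c * ?d * (v i * v i) - 2 * ?c * (v i * u i) - 2 * ?d * (v i * w i) + w i * u i)"
    unfolding spin_inner_def line_reflection_def by (rule sum.cong) (simp_all add: algebra_simps)
  also have "\<dots> = 4 * ?c * ?d * spin_inner n v v - 2 * ?c * ?d - 2 * ?d * ?c + spin_inner n w u"
    by (simp add: spin_inner_def sum.distrib sum_subtractf sum_distrib_left)
  finally show ?thesis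
    using assms by (simp add: algebra_simps)
qed

lemma line_reflection_line_reflection:
  assumes "spin_inner n v v = 1"
  shows "line_reflection n v (line_reflection n v w) = w"
proof -
  have "spin_inner n v (line_reflection n v w) = spin_inner n v w"
    using assms by (simp add: spin_inner_axis_line_reflection)
  then show ?thesis
    unfolding line_reflection_def[of n v "line_reflection n v w"]
    by (simp add: line_reflection_def fun_eq_iff)
qed

context
  fixes n :: nat and s :: "('a::field) spin"
  assumes two: "(2::'a) \<noteq> 0" and symmetry: "spin_symmetry n s"
begin

lemma spin_symmetry_cases:
  obtains "spin_U n s = id"
  | v where "s = (0, v)" "spin_inner n v v = 1"
      "spin_U n s = (\<lambda>x. (fst x, line_reflection n v (snd x)))"
proof -
  obtain a v where s: "s = (a, v)" by (cases s)
  from symmetry have "spin_mult n s s = spin_one"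
    by (simp add: spin_symmetry_def)
  then have norm: "a * a + spin_inner n v v = 1" and "\<And>i. 2 * (a * v i) = 0"
    by (auto simp: s spin_mult_def spin_one_def spin_inner_def fun_eq_iff algebra_simps mult_2)
  with two have av: "\<And>i. a * v i = 0" by simp
  show thesis
  proof (cases "a = 0")
    case True
    have "spin_U n s = (\<lambda>x. (fst x, line_reflection n v (snd x)))"
    proof
      fix x :: "'a spin"
      have "(\<Sum>i<n. v i * (fst x * v i)) = fst x * spin_inner n v v"
        by (simp add: spin_inner_def sum_distrib_left algebra_simps)
      with True norm show "spin_U n s x = (fst x, line_reflection n v (snd x))"
        by (simp add: spin_U_def spin_add_def spin_smult_def spin_mult_def s line_reflection_def
            spin_inner_def[symmetric] fun_eq_iff algebra_simps)
    qed
    with True norm s show thesis by (intro that(2)) simp_all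
  next
    case False
    with av have v0: "v = (\<lambda>_. 0)" by auto
    with norm have "a * a = 1" by (simp add: spin_inner_def)
    then have "spin_U n s = id"
      by (simp add: spin_U_def spin_add_def spin_smult_def spin_mult_def s v0 fun_eq_iff prod_eq_iff
          algebra_simps flip: mult.assoc)
    then show thesis by (rule that(1))
  qed
qed

lemma spin_U_in_carrier:
  assumes "x \<in> spin_carrier n"
  shows "spin_U n s x \<in> spin_carrier n"
proof (cases rule: spin_symmetry_cases)
  case (2 v)
  with symmetry have "\<forall>i\<ge>n. v i = 0"
    by (simp add: spin_symmetry_def spin_carrier_def)
  with 2 assms show ?thesis
    by (simp add: spin_carrier_def line_reflection_def)
qed (use assms in simp)

lemma fst_spin_U: "fst (spin_U n s x) = fst x"
  by (cases rule: spin_symmetry_cases) simp_all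

lemma spin_inner_spin_U:
  "spin_inner n (snd (spin_U n s x)) (snd (spin_U n s y)) = spin_inner n (snd x) (snd y)"
  by (cases rule: spin_symmetry_cases) (simp_all add: spin_inner_line_reflection)

lemma spin_U_spin_U: "spin_U n s (spin_U n s x) = x"
  by (cases rule: spin_symmetry_cases) (simp_all add: line_reflection_line_reflection)

end

lemma spin_vector_isometry_inj_on:
  assumes iso: "spin_vector_isometry n \<Phi>"
    and fst: "\<And>x. x \<in> spin_carrier n \<Longrightarrow> fst (\<Phi> x) = fst x"
  shows "inj_on \<Phi> (spin_carrier n)"
proof (rule inj_onI)
  fix x y assume x: "x \<in> spin_carrier n" and y: "y \<in> spin_carrier n" and eq: "\<Phi> x = \<Phi> y"
  have "snd x j = snd y j" for j
  proof (cases "j < n")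
    case True
    then have "snd x j = spin_inner n (snd (\<Phi> x)) (snd (\<Phi> (spin_basis j)))"
      using spin_vector_isometryD[OF iso x spin_basis_in_carrier] by (simp add: spin_inner_spin_basis)
    also have "\<dots> = snd y j"
      using spin_vector_isometryD[OF iso y spin_basis_in_carrier] True eq
      by (simp add: spin_inner_spin_basis)
    finally show ?thesis .
  qed (use x y in \<open>simp add: spin_carrier_def\<close>)
  with fst[OF x] fst[OF y] eq show "x = y" by (metis prod_eqI ext)
qed

lemma spin_vector_isometry_coordinate:
  assumes iso: "spin_vector_isometry n \<Phi>"
    and "z \<in> spin_carrier n" "\<Phi> z = spin_basis j" "j < n" "w \<in> spin_carrier n"
  shows "snd (\<Phi> w) j = spin_inner n (snd w) (snd z)"
  using spin_vector_isometryD[OF iso \<open>w \<in> spin_carrier n\<close> \<open>z \<in> spin_carrier n\<close>] assms(3,4)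
  by (simp add: spin_inner_spin_basis)

lemma spin_vector_isometry_lincomb:
  assumes into: "\<And>x. x \<in> spin_carrier n \<Longrightarrow> \<Phi> x \<in> spin_carrier n"
    and onto: "spin_carrier n \<subseteq> \<Phi> ` spin_carrier n"
    and iso: "spin_vector_isometry n \<Phi>"
    and carrier: "x \<in> spin_carrier n" "y \<in> spin_carrier n" "u \<in> spin_carrier n"
    and lincomb: "snd x = (\<lambda>i. c * snd y i + d * snd u i)"
  shows "snd (\<Phi> x) = (\<lambda>i. c * snd (\<Phi> y) i + d * snd (\<Phi> u) i)"
proof
  fix j
  show "snd (\<Phi> x) j = c * snd (\<Phi> y) j + d * snd (\<Phi> u) j"
  proof (cases "j < n")
    case True
    with onto obtain z where "z \<in> spin_carrier n" "\<Phi> z = spin_basis j"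
      by (metis imageE spin_basis_in_carrier subsetD)
    with True carrier lincomb show ?thesis
      by (simp add: spin_vector_isometry_coordinate[OF iso] spin_inner_lincomb_left)
  qed (use carrier into in \<open>simp add: spin_carrier_def\<close>)
qed

lemma spin_automorphismI_vector_isometry:
  assumes onto: "\<Phi> ` spin_carrier n = spin_carrier n"
    and fst: "\<And>x. x \<in> spin_carrier n \<Longrightarrow> fst (\<Phi> x) = fst x"
    and iso: "spin_vector_isometry n \<Phi>"
  shows "spin_automorphism n \<Phi>"
proof -
  have "\<And>x. x \<in> spin_carrier n \<Longrightarrow> \<Phi> x \<in> spin_carrier n" "spin_carrier n \<subseteq> \<Phi> ` spin_carrier n"
    using onto by auto
  note lincomb = spin_vector_isometry_lincomb[OF this iso]
  have "bij_betw \<Phi> (spin_carrier n) (spin_carrier n)"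
    using onto spin_vector_isometry_inj_on[OF iso fst] by (simp add: bij_betw_def)
  moreover have "\<Phi> (spin_add x y) = spin_add (\<Phi> x) (\<Phi> y)"
    if x: "x \<in> spin_carrier n" and y: "y \<in> spin_carrier n" for x y
  proof -
    have "snd (\<Phi> (spin_add x y)) = (\<lambda>i. 1 * snd (\<Phi> x) i + 1 * snd (\<Phi> y) i)"
      using x y by (intro lincomb spin_add_in_carrier) (simp_all add: spin_add_def)
    with fst[OF spin_add_in_carrier[OF x y]] show ?thesis
      by (simp add: prod_eq_iff spin_add_def fst x y)
  qed
  moreover have "\<Phi> (spin_smult c x) = spin_smult c (\<Phi> x)" if x: "x \<in> spin_carrier n" for c x
  proof -
    have "snd (\<Phi> (spin_smult c x)) = (\<lambda>i. c * snd (\<Phi> x) i + 0 * snd (\<Phi> x) i)"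
      using x by (intro lincomb spin_smult_in_carrier) (simp_all add: spin_smult_def)
    with fst[OF spin_smult_in_carrier[OF x]] show ?thesis
      by (simp add: prod_eq_iff spin_smult_def fst x)
  qed
  moreover have "\<Phi> (spin_mult n x y) = spin_mult n (\<Phi> x) (\<Phi> y)"
    if x: "x \<in> spin_carrier n" and y: "y \<in> spin_carrier n" for x y
  proof -
    have "snd (\<Phi> (spin_mult n x y)) = (\<lambda>i. fst x * snd (\<Phi> y) i + fst y * snd (\<Phi> x) i)"
      using x y by (intro lincomb spin_mult_in_carrier) (simp_all add: spin_mult_def)
    with fst[OF spin_mult_in_carrier[OF x y]] spin_vector_isometryD[OF iso x y] show ?thesis
      by (simp add: prod_eq_iff spin_mult_def fst x y spin_inner_def)
  qed
  ultimately show ?thesis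
    by (simp add: spin_automorphism_def)
qed

lemma two_local_1_autE:
  assumes "two_local_1_aut n \<Delta>" "x \<in> spin_carrier n" "y \<in> spin_carrier n"
  obtains s where "spin_symmetry n s" "\<Delta> x = spin_U n s x" "\<Delta> y = spin_U n s y"
  using assms unfolding two_local_1_aut_def by blast

context
  fixes n :: nat and \<Delta> :: "('a::field) spin \<Rightarrow> 'a spin"
  assumes two: "(2::'a) \<noteq> 0" and two_local: "two_local_1_aut n \<Delta>"
begin

lemma two_local_1_aut_in_carrier:
  assumes "x \<in> spin_carrier n"
  shows "\<Delta> x \<in> spin_carrier n"
  by (rule two_local_1_autE[OF two_local assms assms]) (simp add: spin_U_in_carrier[OF two _ assms])

lemma fst_two_local_1_aut:
  assumes "x \<in> spin_carrier n"
  shows "fst (\<Delta> x) = fst x"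
  by (rule two_local_1_autE[OF two_local assms assms]) (simp add: fst_spin_U[OF two])

lemma two_local_1_aut_vector_isometry: "spin_vector_isometry n \<Delta>"
  unfolding spin_vector_isometry_def
proof (intro ballI)
  fix x y :: "'a spin"
  assume "x \<in> spin_carrier n" "y \<in> spin_carrier n"
  then obtain s where "spin_symmetry n s" "\<Delta> x = spin_U n s x" "\<Delta> y = spin_U n s y"
    by (rule two_local_1_autE[OF two_local])
  then show "spin_inner n (snd (\<Delta> x)) (snd (\<Delta> y)) = spin_inner n (snd x) (snd y)"
    by (simp add: spin_inner_spin_U[OF two])
qed

lemma two_local_1_aut_involutive:
  assumes "x \<in> spin_carrier n"
  shows "\<Delta> (\<Delta> x) = x"
proof -
  obtain s where "spin_symmetry n s" "\<Delta> x = spin_U n s x" "\<Delta> (\<Delta> x) = spin_U n s (\<Delta> x)"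
    using two_local_1_autE[OF two_local assms two_local_1_aut_in_carrier[OF assms]] .
  then show ?thesis
    by (simp add: spin_U_spin_U[OF two])
qed

lemma two_local_1_aut_image: "\<Delta> ` spin_carrier n = spin_carrier n"
  using two_local_1_aut_in_carrier two_local_1_aut_involutive
  by (metis image_subsetI subsetI subset_antisym image_eqI)

end

theorem theorem4p5:
  fixes n :: nat and \<Delta> :: "('a::field) spin \<Rightarrow> 'a spin"
  assumes "(2::'a) \<noteq> 0"
    and "two_local_1_aut n \<Delta>"
  shows "spin_automorphism n \<Delta>"
proof (rule spin_automorphismI_vector_isometry)
  show "\<Delta> ` spin_carrier n = spin_carrier n"
    using assms by (rule two_local_1_aut_image)
  show "fst (\<Delta> x) = fst x" if "x \<in> spin_carrier n" for x
    using assms that by (rule fst_two_local_1_aut)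
  show "spin_vector_isometry n \<Delta>"
    using assms by (rule two_local_1_aut_vector_isometry)
qed

end
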